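(* For every knot diagram $D$ and every Dehn $p$-coloring $C$ of $D$, $\partial_2^{\rm SLB}(W(D,C))=0$ in $C_1^{\rm SLB}(\mathbb Z_p)$.
   Context: Let $p$ be an odd prime, $X=\mathbb Z_p$, $[a,b,c]=a-b+c$, $\rho((a,b))=(b,a)$, $(a,b)\,\underline{\star}\,(a,c)=(c,[a,b,c])$, $(a,b)\,\overline{\star}\,(a,c)=(c,[a,c,b])$. For $n\ge1$ let $C_n^{\rm lb}(X)$ be the free abelian group on tuples $((a,b_1),\dots,(a,b_n))$, $a,b_i\in X$ (zero for $n\le 0$), with $\partial_n^{\rm lb}$ for $n\ge 2$ given by $\sum_{i=1}^n(-1)^i\{((a,b_1),\dots,\widehat{(a,b_i)},\dots,(a,b_n))-((b_i,[a,b_1,b_i]),\dots,(b_i,[a,b_{i-1},b_i]),(b_i,[a,b_i,b_{i+1}]),\dots,(b_i,[a,b_i,b_n]))\}$ and $\partial_n^{\rm lb}=0$ for $n\le1$; in particular $\partial_2^{\rm lb}((a,b),(a,c))=-(a,c)+(a,b)+(b,[a,b,c])-(c,[a,b,c])$. Let $D_n^{\rm lb}(X)$ be generated by tuples with $b_i=b_{i+1}$ for some $i$, $D_n^{\rm lb}(X,\rho)$ generated by all $((a,b_1),\dots,(a,b_n))+((a,b_1)\underline\star(a,b_i),\dots,(a,b_{i-1})\underline\star(a,b_i),\rho((a,b_i)),(a,b_{i+1})\overline\star(a,b_i),\dots,(a,b_n)\overline\star(a,b_i))$; $C_n^{\rm SLB}(X)=C_n^{\rm lb}(X)/(D_n^{\rm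 lb}(X)+D_n^{\rm lb}(X,\rho))$ with induced boundary $\partial_n^{\rm SLB}$. Dehn $p$-colorings: for a knot diagram $D$ with region set $\mathcal R(D)$, at each crossing label the four regions $x_1,x_2,x_3,x_4$ so that $x_2$ is adjacent to $x_1$ across an under-arc, $x_3$ adjacent to $x_1$ across the over-arc, $x_4$ opposite $x_1$; a Dehn $p$-coloring is $C:\mathcal R(D)\to\mathbb Z_p$ with $C(x_1)+C(x_3)=C(x_2)+C(x_4)$ at every crossing. At each crossing $\chi$ choose a specified region $x_1$, put $a=C(x_1),b=C(x_2),c=C(x_3)$ and $w_\chi=\varepsilon((a,b),(a,c))\in C_2^{\rm SLB}(X)$, with $\varepsilon=+1$ if $(n_o,n_u)$ is a positively oriented basis of $\mathbb R^2$ and $-1$ otherwise ($n_u$ the normal vector from $x_1$ to $x_2$, $n_o$ from $x_1$ to $x_3$). $W(D,C)=\sum_\chi w_\chi\in C_2^{\rm SLB}(X)$; it is independent of the choices of specified regions. *)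

theory Defs
  imports Main "HOL-Library.Function_Algebras" "HOL-Computational_Algebra.Primes"
begin

text \<open>Elements of X = Z_p are represented by integers in {0..<p}; the ternary
operation [a,b,c] = a - b + c is computed modulo p.  A generator of C_n^lb is a
list ((a,b_1),...,(a,b_n)) of pairs with common first entry.  Chains are
finitely supported integer-valued functions on such lists (free abelian group).\<close>

type_synonym lb_chain = "(int \<times> int) list \<Rightarrow> int"

definition tern :: "int \<Rightarrow> int \<Rightarrow> int \<Rightarrow> int \<Rightarrow> int" where
  "tern p a b c = (a - b + c) mod p"

definition lb_tuple :: "int \<Rightarrow> nat \<Rightarrow> (int \<times> int) list \<Rightarrow> bool" where
  "lb_tuple p n t \<longleftrightarrow> n \<ge> 1 \<and> length t = n \<and>
     (\<forall>x\<in>set t. fst x \<in> {0..<p} \<and> snd x \<in> {0..<p} \<and> fst x = fst (hd t))"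

definition is_lb_chain :: "int \<Rightarrow> nat \<Rightarrow> lb_chain \<Rightarrow> bool" where
  "is_lb_chain p n c \<longleftrightarrow> finite {t. c t \<noteq> 0} \<and> (\<forall>t. c t \<noteq> 0 \<longrightarrow> lb_tuple p n t)"

definition gen :: "(int \<times> int) list \<Rightarrow> lb_chain" where
  "gen t = (\<lambda>s. if s = t then 1 else 0)"

definition ustar :: "int \<Rightarrow> int \<times> int \<Rightarrow> int \<times> int \<Rightarrow> int \<times> int" where
  "ustar p x y = (snd y, tern p (fst x) (snd x) (snd y))"

definition ostar :: "int \<Rightarrow> int \<times> int \<Rightarrow> int \<times> int \<Rightarrow> int \<times> int" where
  "ostar p x y = (snd y, tern p (fst x) (snd y) (snd x))"

definition rho :: "int \<times> int \<Rightarrow> int \<times> int" where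
  "rho x = (snd x, fst x)"

text \<open>Deleting the i-th entry (0-based) and the "moved" tuple at position i (0-based):
((a,b_j) ustar (a,b_i))_{j<i}, ((a,b_j) ostar (a,b_i))_{j>i}.\<close>
definition del_at :: "nat \<Rightarrow> 'a list \<Rightarrow> 'a list" where
  "del_at i t = take i t @ drop (Suc i) t"

definition face_at :: "int \<Rightarrow> nat \<Rightarrow> (int \<times> int) list \<Rightarrow> (int \<times> int) list" where
  "face_at p i t = map (\<lambda>x. ustar p x (t ! i)) (take i t) @
                   map (\<lambda>x. ostar p x (t ! i)) (drop (Suc i) t)"

text \<open>Boundary of a generator; index i (1-based in the paper) is i+1 here.\<close>
definition bd_gen :: "int \<Rightarrow> (int \<times> int) list \<Rightarrow> lb_chain" where
  "bd_gen p t = (if length t \<le> 1 then 0 else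
     (\<Sum>i<length t. (- 1) ^ (Suc i) * (gen (del_at i t) - gen (face_at p i t))))"

definition bd_lb :: "int \<Rightarrow> nat \<Rightarrow> lb_chain \<Rightarrow> lb_chain" where
  "bd_lb p n c = (if n \<le> 1 then 0 else (\<Sum>t\<in>{t. c t \<noteq> 0}. (\<lambda>_. c t) * bd_gen p t))"

definition D_gens :: "int \<Rightarrow> nat \<Rightarrow> lb_chain set" where
  "D_gens p n = {gen t | t. lb_tuple p n t \<and> (\<exists>i. Suc i < n \<and> snd (t ! i) = snd (t ! Suc i))}"

definition rho_move :: "int \<Rightarrow> nat \<Rightarrow> (int \<times> int) list \<Rightarrow> (int \<times> int) list" where
  "rho_move p i t = map (\<lambda>x. ustar p x (t ! i)) (take i t) @ [rho (t ! i)] @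
                    map (\<lambda>x. ostar p x (t ! i)) (drop (Suc i) t)"

definition Drho_gens :: "int \<Rightarrow> nat \<Rightarrow> lb_chain set" where
  "Drho_gens p n = {gen t + gen (rho_move p i t) | t i. lb_tuple p n t \<and> i < n}"

inductive_set zspan :: "lb_chain set \<Rightarrow> lb_chain set" for S where
  zero: "0 \<in> zspan S"
| add: "x \<in> zspan S \<Longrightarrow> g \<in> S \<Longrightarrow> x + g \<in> zspan S"
| sub: "x \<in> zspan S \<Longrightarrow> g \<in> S \<Longrightarrow> x - g \<in> zspan S"

text \<open>The submodule D_n^lb(X) + D_n^lb(X,rho); C_n^SLB = C_n^lb / this.
A class [c] in C_n^SLB is zero iff c lies in this subgroup.\<close>
definition D_SLB :: "int \<Rightarrow> nat \<Rightarrow> lb_chain set" where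
  "D_SLB p n = zspan (D_gens p n \<union> Drho_gens p n)"

text \<open>A diagram with crossing set V is encoded by a rotation system: each crossing c
has four half-edges (darts) (c,0),(c,1),(c,2),(c,3) in counterclockwise order,
where (c,0),(c,2) belong to the under-arc and (c,1),(c,3) to the over-arc.  The
fixed-point-free involution alpha pairs the two ends of each edge (semi-arc).
The corner (c,k) is the corner between darts (c,k) and (c,(k+1) mod 4).\<close>

definition darts :: "'v set \<Rightarrow> ('v \<times> nat) set" where
  "darts V = V \<times> {0..<4}"

definition rot :: "'v \<times> nat \<Rightarrow> 'v \<times> nat" where
  "rot d = (fst d, (snd d + 1) mod 4)"

definition face_perm :: "(('v \<times> nat) \<Rightarrow> ('v \<times> nat)) \<Rightarrow> 'v \<times> nat \<Rightarrow> 'v \<times> nat" where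
  "face_perm \<alpha> d = \<alpha> (rot d)"

definition region_of :: "(('v \<times> nat) \<Rightarrow> ('v \<times> nat)) \<Rightarrow> 'v \<times> nat \<Rightarrow> ('v \<times> nat) set" where
  "region_of \<alpha> d = {(face_perm \<alpha> ^^ n) d | n. True}"

definition regions :: "'v set \<Rightarrow> (('v \<times> nat) \<Rightarrow> ('v \<times> nat)) \<Rightarrow> ('v \<times> nat) set set" where
  "regions V \<alpha> = region_of \<alpha> ` darts V"

text \<open>Strand relation: going straight through a crossing, or along an edge.\<close>
definition strand_rel :: "'v set \<Rightarrow> (('v \<times> nat) \<Rightarrow> ('v \<times> nat)) \<Rightarrow> (('v \<times> nat) \<times> ('v \<times> nat)) set" where
  "strand_rel V \<alpha> = {(d, \<alpha> d) | d. d \<in> darts V} \<union> {(d, rot (rot d)) | d. d \<in> darts V}"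

text \<open>A knot diagram: finitely many crossings, well-formed edge pairing, and (if there
is at least one crossing) exactly one component and genus 0 (V - E + F = 2 with
E = 2V), i.e. the diagram lives on the sphere / plane.  The empty crossing set
represents the crossingless diagram (a circle).\<close>
definition knot_diagram :: "'v set \<Rightarrow> (('v \<times> nat) \<Rightarrow> ('v \<times> nat)) \<Rightarrow> bool" where
  "knot_diagram V \<alpha> \<longleftrightarrow> finite V \<and>
     (\<forall>d\<in>darts V. \<alpha> d \<in> darts V \<and> \<alpha> d \<noteq> d \<and> \<alpha> (\<alpha> d) = d) \<and>
     (V \<noteq> {} \<longrightarrow> (\<forall>d\<in>darts V. \<forall>d'\<in>darts V. (d, d') \<in> (strand_rel V \<alpha>)\<^sup>*) \<and>
                  card (regions V \<alpha>) = card V + 2)"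

text \<open>Dehn p-coloring: C : regions -> Z_p with C(x1)+C(x3) = C(x2)+C(x4) at each crossing.
With x1 the corner (c,0), x2 = corner (c,3) (across the under-dart (c,0)),
x3 = corner (c,1) (across the over-dart (c,1)), x4 = corner (c,2).\<close>
definition corner_col :: "(('v \<times> nat) \<Rightarrow> ('v \<times> nat)) \<Rightarrow> (('v \<times> nat) set \<Rightarrow> int) \<Rightarrow> 'v \<Rightarrow> nat \<Rightarrow> int" where
  "corner_col \<alpha> C c k = C (region_of \<alpha> (c, k mod 4))"

definition dehn_coloring :: "int \<Rightarrow> 'v set \<Rightarrow> (('v \<times> nat) \<Rightarrow> ('v \<times> nat)) \<Rightarrow> (('v \<times> nat) set \<Rightarrow> int) \<Rightarrow> bool" where
  "dehn_coloring p V \<alpha> C \<longleftrightarrow> (\<forall>R\<in>regions V \<alpha>. C R \<in> {0..<p}) \<and>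
     (\<forall>c\<in>V. (corner_col \<alpha> C c 0 + corner_col \<alpha> C c 1) mod p =
             (corner_col \<alpha> C c 3 + corner_col \<alpha> C c 2) mod p)"

text \<open>Weight at crossing c with specified region the corner (c,k), k<4.
If k is even, dart (c,k) is under and (c,k+1) over: x2 = corner k-1, x3 = corner k+1,
and (n_o,n_u) is positively oriented, so epsilon = +1.
If k is odd, dart (c,k) is over and (c,k+1) under: x2 = corner k+1, x3 = corner k-1,
and epsilon = -1.\<close>
definition crossing_weight :: "(('v \<times> nat) \<Rightarrow> ('v \<times> nat)) \<Rightarrow> (('v \<times> nat) set \<Rightarrow> int) \<Rightarrow> 'v \<Rightarrow> nat \<Rightarrow> lb_chain" where
  "crossing_weight \<alpha> C c k =
     (let a = corner_col \<alpha> C c k;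
          l = corner_col \<alpha> C c (k + 3);
          r = corner_col \<alpha> C c (k + 1)
      in if even k then gen [(a, l), (a, r)] else - gen [(a, r), (a, l)])"

text \<open>W(D,C) (a representative in C_2^lb of the class in C_2^SLB), for an arbitrary
choice sel of specified regions.\<close>
definition W :: "'v set \<Rightarrow> (('v \<times> nat) \<Rightarrow> ('v \<times> nat)) \<Rightarrow> (('v \<times> nat) set \<Rightarrow> int) \<Rightarrow> ('v \<Rightarrow> nat) \<Rightarrow> lb_chain" where
  "W V \<alpha> C sel = (\<Sum>c\<in>V. crossing_weight \<alpha> C c (sel c))"

end

theory Submission
  imports Defs "HOL-Combinatorics.Permutations"
begin

(* Each crossing contributes a boundary that, modulo the rho-relations (a,b) + (b,a),
   equals minus the sum of the four "dart chains" (x,y), where x and y are the colours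
   of the two regions on either side of a half-edge of the crossing; this uses only the
   Dehn condition at that crossing.  Summed over all crossings, the dart chains cancel
   in pairs along the edges: the two ends of an edge see the same two regions in
   opposite order, so their dart chains add up to a rho-relation. *)

lemma zspan_add:
  assumes "x \<in> zspan S" "y \<in> zspan S"
  shows "x + y \<in> zspan S"
  using assms(2)
proof induction
  case zero then show ?case using assms(1) by (simp only: add_0_right)
next
  case (add y g)
  have "x + (y + g) = (x + y) + g" by (simp only: add.assoc)
  then show ?case using zspan.add[OF add.IH add.hyps(2)] by (simp only:)
next
  case (sub y g)
  have "x + (y - g) = (x + y) - g" by (simp only: add_diff_eq)
  then show ?case using zspan.sub[OF sub.IH sub.hyps(2)] by (simp only:)
qed

lemma zspan_uminus: "x \<in> zspan S \<Longrightarrow> - x \<in> zspan S"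
proof (induction x rule: zspan.induct)
  case zero then show ?case by (simp only: minus_zero zspan.zero)
next
  case (add x g)
  have "- (x + g) = - x - g" by (simp only: minus_add_distrib diff_conv_add_uminus)
  then show ?case using zspan.sub[OF add.IH add.hyps(2)] by (simp only:)
next
  case (sub x g)
  have "- (x - g) = - x + g" by (subst minus_diff_eq, subst diff_conv_add_uminus, rule add.commute)
  then show ?case using zspan.add[OF sub.IH sub.hyps(2)] by (simp only:)
qed

lemma zspan_diff: "x \<in> zspan S \<Longrightarrow> y \<in> zspan S \<Longrightarrow> x - y \<in> zspan S"
  unfolding diff_conv_add_uminus by (intro zspan_add zspan_uminus)

lemma zspan_sum: "finite A \<Longrightarrow> (\<And>a. a \<in> A \<Longrightarrow> f a \<in> zspan S) \<Longrightarrow> sum f A \<in> zspan S"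
proof (induction A rule: finite_induct)
  case empty then show ?case by (simp only: sum.empty zspan.zero)
next
  case (insert a A) then show ?case
    unfolding sum.insert[OF insert.hyps] by (intro zspan_add) auto
qed

lemma zspan_sum_involution:
  assumes "finite A"
    and "\<And>d. d \<in> A \<Longrightarrow> \<sigma> d \<in> A \<and> \<sigma> d \<noteq> d \<and> \<sigma> (\<sigma> d) = d"
    and "\<And>d. d \<in> A \<Longrightarrow> g d + g (\<sigma> d) \<in> zspan S"
  shows "sum g A \<in> zspan S"
  using assms
proof (induction "card A" arbitrary: A rule: less_induct)
  case less
  show ?case
  proof (cases "A = {}")
    case True then show ?thesis by (simp only: sum.empty zspan.zero)
  next
    case False
    then obtain d where d: "d \<in> A" by blast
    have \<sigma>d: "\<sigma> d \<in> A" "\<sigma> d \<noteq> d" "\<sigma> (\<sigma> d) = d" using less.prems(2)[OF d] by auto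
    let ?B = "A - {d, \<sigma> d}"
    have "sum g ?B \<in> zspan S"
    proof (rule less.hyps)
      show "card ?B < card A"
        using d \<sigma>d less.prems(1) by (intro psubset_card_mono) auto
      show "\<sigma> e \<in> ?B \<and> \<sigma> e \<noteq> e \<and> \<sigma> (\<sigma> e) = e" if "e \<in> ?B" for e
        using that less.prems(2) \<sigma>d(3) by (smt (verit) Diff_iff insert_iff singletonD)
    qed (use less.prems in auto)
    moreover have "sum g A = sum g ?B + sum g {d, \<sigma> d}"
      using d \<sigma>d less.prems(1) by (intro sum.subset_diff) auto
    moreover have "sum g {d, \<sigma> d} = g d + g (\<sigma> d)"
      using \<sigma>d(2) by simp
    ultimately show ?thesis
      using zspan_add less.prems(3)[OF d] by (simp only:)
  qed
qed

definition rho_pair :: "int \<Rightarrow> int \<Rightarrow> lb_chain" where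
  "rho_pair x y = gen [(x, y)] + gen [(y, x)]"

lemma rho_pair_in_D_SLB:
  assumes "x \<in> {0..<p}" "y \<in> {0..<p}"
  shows "rho_pair x y \<in> D_SLB p 1"
proof -
  have "lb_tuple p 1 [(x, y)]" using assms by (simp add: lb_tuple_def)
  moreover have "rho_move p 0 [(x, y)] = [(y, x)]" by (simp add: rho_move_def rho_def)
  ultimately have "rho_pair x y \<in> Drho_gens p 1"
    unfolding Drho_gens_def rho_pair_def by force
  then show ?thesis
    unfolding D_SLB_def using zspan.add[OF zspan.zero, of _ "D_gens p 1 \<union> Drho_gens p 1"] by simp
qed

definition finite_support :: "lb_chain \<Rightarrow> bool" where
  "finite_support c \<longleftrightarrow> finite {t. c t \<noteq> 0}"

lemma finite_support_gen: "finite_support (gen t)"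
  by (simp add: finite_support_def gen_def)

lemma finite_support_add: "finite_support a \<Longrightarrow> finite_support b \<Longrightarrow> finite_support (a + b)"
  unfolding finite_support_def
  by (rule finite_subset[of _ "{t. a t \<noteq> 0} \<union> {t. b t \<noteq> 0}"]) auto

lemma finite_support_uminus: "finite_support a \<Longrightarrow> finite_support (- a)"
  by (simp add: finite_support_def)

lemma finite_support_sum:
  "finite A \<Longrightarrow> (\<And>x. x \<in> A \<Longrightarrow> finite_support (f x)) \<Longrightarrow> finite_support (sum f A)"
  by (induction A rule: finite_induct) (auto simp: finite_support_add, simp add: finite_support_def)

lemma bd_lb_eq_sum_superset:
  assumes "1 < n" "finite S" "{t. c t \<noteq> 0} \<subseteq> S"
  shows "bd_lb p n c = (\<Sum>t\<in>S. (\<lambda>_. c t) * bd_gen p t)"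
  unfolding bd_lb_def using assms
  by (auto intro: sum.mono_neutral_left simp: zero_fun_def[symmetric])

lemma bd_lb_add:
  assumes "finite_support a" "finite_support b"
  shows "bd_lb p n (a + b) = bd_lb p n a + bd_lb p n b"
proof (cases "n \<le> 1")
  case True then show ?thesis by (simp add: bd_lb_def)
next
  case False
  let ?S = "{t. a t \<noteq> 0} \<union> {t. b t \<noteq> 0}"
  have S: "finite ?S" using assms by (simp add: finite_support_def)
  have "bd_lb p n (a + b) = (\<Sum>t\<in>?S. (\<lambda>_. (a + b) t) * bd_gen p t)"
    using False S by (intro bd_lb_eq_sum_superset) auto
  also have "\<dots> = (\<Sum>t\<in>?S. (\<lambda>_. a t) * bd_gen p t + (\<lambda>_. b t) * bd_gen p t)"
    by (rule sum.cong) (auto simp: fun_eq_iff algebra_simps)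
  also have "\<dots> = bd_lb p n a + bd_lb p n b"
    using False S by (simp add: sum.distrib bd_lb_eq_sum_superset[of n ?S])
  finally show ?thesis .
qed

lemma bd_lb_uminus:
  assumes "finite_support a"
  shows "bd_lb p n (- a) = - bd_lb p n a"
proof -
  have "bd_lb p n (- a) + bd_lb p n a = bd_lb p n 0"
    using bd_lb_add[OF finite_support_uminus[OF assms] assms] by simp
  also have "\<dots> = 0" by (simp add: bd_lb_def)
  finally show ?thesis by (simp add: eq_neg_iff_add_eq_0)
qed

lemma bd_lb_gen:
  assumes "1 < n"
  shows "bd_lb p n (gen t) = bd_gen p t"
proof -
  have "bd_lb p n (gen t) = (\<Sum>t'\<in>{t}. (\<lambda>_. gen t t') * bd_gen p t')"
    using assms by (intro bd_lb_eq_sum_superset) (auto simp: gen_def)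
  then show ?thesis by (simp add: gen_def one_fun_def[symmetric])
qed

lemma bd_lb_sum:
  "finite A \<Longrightarrow> (\<And>x. x \<in> A \<Longrightarrow> finite_support (f x)) \<Longrightarrow>
   bd_lb p n (sum f A) = (\<Sum>x\<in>A. bd_lb p n (f x))"
proof (induction A rule: finite_induct)
  case empty then show ?case by (simp add: bd_lb_def zero_fun_def)
next
  case (insert x F)
  have "finite_support (f x)" "finite_support (sum f F)"
    using insert by (auto intro: finite_support_sum)
  moreover have "bd_lb p n (sum f F) = (\<Sum>x\<in>F. bd_lb p n (f x))"
    using insert by simp
  ultimately show ?case
    unfolding sum.insert[OF insert.hyps] by (simp only: bd_lb_add)
qed

lemma bd_gen_pair:
  "bd_gen p [(a, b), (a, c)] =
     gen [(a, b)] - gen [(c, tern p a b c)] - gen [(a, c)] + gen [(b, tern p a b c)]"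
proof -
  have "{..<length [(a, b), (a, c)]} = {0, 1::nat}" by auto
  then show ?thesis
    by (simp add: bd_gen_def del_at_def face_at_def ustar_def ostar_def algebra_simps)
qed

lemma tern_eqI:
  assumes "(a + c) mod p = (b + d) mod p" "d \<in> {0..<p}"
  shows "tern p a b c = d"
proof -
  have "tern p a b c = ((a + c) mod p - b) mod p" by (simp add: tern_def mod_diff_left_eq algebra_simps)
  also have "\<dots> = d" using assms by (simp add: mod_diff_left_eq)
  finally show ?thesis .
qed

(* The four choices of specified region at a crossing with corner colours a0, ..., a3;
   G is the sum of the four dart chains of the crossing. *)
lemma bd_gen_plus_corner_square:
  fixes a0 a1 a2 a3 p :: int
  assumes dehn: "(a0 + a1) mod p = (a3 + a2) mod p"
    and col: "a0 \<in> {0..<p}" "a1 \<in> {0..<p}" "a2 \<in> {0..<p}" "a3 \<in> {0..<p}"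
  defines "G \<equiv> gen [(a3, a0)] + gen [(a0, a1)] + gen [(a1, a2)] + gen [(a2, a3)]"
  shows "bd_gen p [(a0, a3), (a0, a1)] + G = rho_pair a0 a3 + rho_pair a3 a2"
    and "- bd_gen p [(a1, a2), (a1, a0)] + G = rho_pair a0 a3 + rho_pair a1 a0"
    and "bd_gen p [(a2, a1), (a2, a3)] + G = rho_pair a2 a1 + rho_pair a1 a0"
    and "- bd_gen p [(a3, a0), (a3, a2)] + G = rho_pair a2 a1 + rho_pair a3 a2"
proof -
  have "tern p a0 a3 a1 = a2" "tern p a1 a2 a0 = a3" "tern p a2 a1 a3 = a0" "tern p a3 a0 a2 = a1"
    using dehn col by (auto intro!: tern_eqI simp: ac_simps)
  then show "bd_gen p [(a0, a3), (a0, a1)] + G = rho_pair a0 a3 + rho_pair a3 a2"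
    and "- bd_gen p [(a1, a2), (a1, a0)] + G = rho_pair a0 a3 + rho_pair a1 a0"
    and "bd_gen p [(a2, a1), (a2, a3)] + G = rho_pair a2 a1 + rho_pair a1 a0"
    and "- bd_gen p [(a3, a0), (a3, a2)] + G = rho_pair a2 a1 + rho_pair a3 a2"
    unfolding G_def rho_pair_def bd_gen_pair by (simp_all add: algebra_simps)
qed

lemma funpow_returns_on_finite_set:
  assumes "finite A" "inj_on f A" "f ` A \<subseteq> A" "x \<in> A"
  obtains n where "n > 0" "(f ^^ n) x = x"
proof -
  define g where "g y = (if y \<in> A then f y else y)" for y
  have "g permutes A"
    by (rule inj_imp_permutes) (use assms in \<open>auto simp: g_def inj_on_def\<close>)
  then obtain n where "n > 0" "(g ^^ n) x = x"
    using permutation_self permutes_imp_permutation assms(1) by metis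
  moreover have "(g ^^ m) x = (f ^^ m) x \<and> (f ^^ m) x \<in> A" for m
    by (induction m) (use assms in \<open>auto simp: g_def\<close>)
  ultimately show thesis using that by simp
qed

lemma face_perm_inj_on:
  assumes "\<forall>d\<in>darts V. \<alpha> d \<in> darts V \<and> \<alpha> (\<alpha> d) = d"
  shows "inj_on (face_perm \<alpha>) (darts V)"
proof (rule inj_onI)
  fix d e assume d: "d \<in> darts V" and e: "e \<in> darts V" and eq: "face_perm \<alpha> d = face_perm \<alpha> e"
  have "rot d \<in> darts V" "rot e \<in> darts V" using d e by (auto simp: darts_def rot_def)
  then have "rot d = rot e" using eq assms unfolding face_perm_def by metis
  then show "d = e" using d e by (auto simp: darts_def rot_def prod_eq_iff mod_Suc split: if_splits)
qed

lemma region_of_face_perm: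
  assumes "knot_diagram V \<alpha>" "d \<in> darts V"
  shows "region_of \<alpha> (face_perm \<alpha> d) = region_of \<alpha> d"
proof -
  let ?f = "face_perm \<alpha>"
  have \<alpha>: "\<forall>d\<in>darts V. \<alpha> d \<in> darts V \<and> \<alpha> (\<alpha> d) = d"
    using assms(1) by (simp add: knot_diagram_def)
  have "rot e \<in> darts V" if "e \<in> darts V" for e
    using that by (auto simp: darts_def rot_def)
  then have "?f ` darts V \<subseteq> darts V"
    using \<alpha> by (auto simp: face_perm_def)
  moreover have "finite (darts V)"
    using assms(1) by (simp add: knot_diagram_def darts_def)
  ultimately obtain n where n: "n > 0" "(?f ^^ n) d = d"
    using funpow_returns_on_finite_set face_perm_inj_on[OF \<alpha>] assms(2) by metis
  have "(?f ^^ m) d = (?f ^^ Suc (m + n - 1)) d" for m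
    using n by (simp add: funpow_add)
  then show ?thesis
    unfolding region_of_def funpow_Suc_right[symmetric, THEN fun_cong, unfolded o_apply] by blast
qed

lemma region_of_alpha:
  assumes "knot_diagram V \<alpha>" "(c, j) \<in> darts V"
  shows "region_of \<alpha> (\<alpha> (c, j)) = region_of \<alpha> (c, (j + 3) mod 4)"
proof -
  have "(c, (j + 3) mod 4) \<in> darts V" using assms(2) by (simp add: darts_def)
  moreover have "j < 4" using assms(2) by (simp add: darts_def)
  then have "((j + 3) mod 4 + 1) mod 4 = j" by presburger
  then have "face_perm \<alpha> (c, (j + 3) mod 4) = \<alpha> (c, j)"
    by (simp add: face_perm_def rot_def)
  ultimately show ?thesis using region_of_face_perm[OF assms(1)] by metis
qed

(* corner j - 1 and corner j are the regions on the two sides of the half-edge (c, j) *)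
definition dart_gen :: "('v \<times> nat \<Rightarrow> 'v \<times> nat) \<Rightarrow> (('v \<times> nat) set \<Rightarrow> int) \<Rightarrow> 'v \<times> nat \<Rightarrow> lb_chain" where
  "dart_gen \<alpha> C d = gen [(corner_col \<alpha> C (fst d) (snd d + 3), corner_col \<alpha> C (fst d) (snd d))]"

lemma corner_col_range:
  assumes "dehn_coloring p V \<alpha> C" "c \<in> V"
  shows "corner_col \<alpha> C c k \<in> {0..<p}"
proof -
  have "region_of \<alpha> (c, k mod 4) \<in> regions V \<alpha>"
    using assms(2) by (simp add: regions_def darts_def)
  then show ?thesis using assms(1) by (simp add: dehn_coloring_def corner_col_def)
qed

lemma dart_gen_plus_dart_gen_alpha:
  assumes "knot_diagram V \<alpha>" "(c, j) \<in> darts V"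
  shows "dart_gen \<alpha> C (c, j) + dart_gen \<alpha> C (\<alpha> (c, j)) =
    rho_pair (corner_col \<alpha> C c (j + 3)) (corner_col \<alpha> C c j)"
proof -
  obtain c' j' where \<alpha>d: "\<alpha> (c, j) = (c', j')" "(c', j') \<in> darts V" "\<alpha> (c', j') = (c, j)"
    using assms by (cases "\<alpha> (c, j)") (auto simp: knot_diagram_def)
  have "region_of \<alpha> (c', (j' + 3) mod 4) = region_of \<alpha> (c, j mod 4)"
    using region_of_alpha[OF assms(1) \<alpha>d(2)] \<alpha>d(3) assms(2) by (simp add: darts_def)
  moreover have "region_of \<alpha> (c', j' mod 4) = region_of \<alpha> (c, (j + 3) mod 4)"
    using region_of_alpha[OF assms] \<alpha>d(1,2) by (simp add: darts_def)
  ultimately show ?thesis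
    by (simp add: dart_gen_def rho_pair_def corner_col_def \<alpha>d(1))
qed

lemma sum_dart_gen_in_D_SLB:
  assumes "knot_diagram V \<alpha>" "dehn_coloring p V \<alpha> C"
  shows "sum (dart_gen \<alpha> C) (darts V) \<in> D_SLB p 1"
  unfolding D_SLB_def
proof (rule zspan_sum_involution)
  show "finite (darts V)" using assms(1) by (simp add: knot_diagram_def darts_def)
  show "\<alpha> d \<in> darts V \<and> \<alpha> d \<noteq> d \<and> \<alpha> (\<alpha> d) = d" if "d \<in> darts V" for d
    using assms(1) that by (simp add: knot_diagram_def)
  show "dart_gen \<alpha> C d + dart_gen \<alpha> C (\<alpha> d) \<in> zspan (D_gens p 1 \<union> Drho_gens p 1)"
    if d: "d \<in> darts V" for d
  proof -
    obtain c j where "d = (c, j)" "c \<in> V" using d by (auto simp: darts_def)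
    then show ?thesis
      using dart_gen_plus_dart_gen_alpha[OF assms(1)] rho_pair_in_D_SLB corner_col_range[OF assms(2)] d
      by (simp add: D_SLB_def)
  qed
qed

lemma bd_crossing_weight_plus_dart_gens:
  assumes "dehn_coloring p V \<alpha> C" "c \<in> V" "k < 4"
  shows "bd_lb p 2 (crossing_weight \<alpha> C c k) + (\<Sum>j<4. dart_gen \<alpha> C (c, j)) \<in> D_SLB p 1"
proof -
  define a where "a = corner_col \<alpha> C c"
  have col: "a j \<in> {0..<p}" for j
    using corner_col_range[OF assms(1,2)] by (simp add: a_def)
  have dehn: "(a 0 + a 1) mod p = (a 3 + a 2) mod p"
    using assms(1,2) by (simp add: dehn_coloring_def a_def)
  have periodic: "a 4 = a 0" "a 5 = a 1" "a 6 = a 2"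
    by (simp_all add: a_def corner_col_def)
  have dart_sum: "(\<Sum>j<4. dart_gen \<alpha> C (c, j)) =
      gen [(a 3, a 0)] + gen [(a 0, a 1)] + gen [(a 1, a 2)] + gen [(a 2, a 3)]"
  proof -
    have "{..<4::nat} = {0, 1, 2, 3}" by auto
    then show ?thesis by (simp add: dart_gen_def a_def[symmetric] periodic algebra_simps)
  qed
  note square = bd_gen_plus_corner_square[OF dehn col col col col]
  have pairs: "rho_pair (a i) (a j) + rho_pair (a i') (a j') \<in> D_SLB p 1" for i j i' j'
    unfolding D_SLB_def by (intro zspan_add rho_pair_in_D_SLB[unfolded D_SLB_def] col)
  have weight:
    "bd_lb p 2 (crossing_weight \<alpha> C c 0) = bd_gen p [(a 0, a 3), (a 0, a 1)]"
    "bd_lb p 2 (crossing_weight \<alpha> C c 1) = - bd_gen p [(a 1, a 2), (a 1, a 0)]"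
    "bd_lb p 2 (crossing_weight \<alpha> C c 2) = bd_gen p [(a 2, a 1), (a 2, a 3)]"
    "bd_lb p 2 (crossing_weight \<alpha> C c 3) = - bd_gen p [(a 3, a 0), (a 3, a 2)]"
    by (simp_all add: crossing_weight_def Let_def a_def corner_col_def bd_lb_gen bd_lb_uminus
        finite_support_gen) (simp add: numeral_2_eq_2)
  from \<open>k < 4\<close> consider "k = 0" | "k = 1" | "k = 2" | "k = 3" by linarith
  then show ?thesis
    unfolding dart_sum by cases (simp_all only: weight square pairs)
qed

lemma finite_support_crossing_weight: "finite_support (crossing_weight \<alpha> C c k)"
  by (simp add: crossing_weight_def Let_def finite_support_gen finite_support_uminus)

theorem lemma4p2:
  fixes p :: int and V :: "'v set" and \<alpha> :: "'v \<times> nat \<Rightarrow> 'v \<times> nat"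
    and C :: "('v \<times> nat) set \<Rightarrow> int" and sel :: "'v \<Rightarrow> nat"
  assumes "prime p" and "odd p"
    and "knot_diagram V \<alpha>"
    and "dehn_coloring p V \<alpha> C"
    and "\<forall>c\<in>V. sel c < 4"
  shows "bd_lb p 2 (W V \<alpha> C sel) \<in> D_SLB p 1"
proof -
  let ?w = "\<lambda>c. bd_lb p 2 (crossing_weight \<alpha> C c (sel c))"
  let ?g = "\<lambda>c. \<Sum>j<4. dart_gen \<alpha> C (c, j)"
  have V: "finite V" using assms(3) by (simp add: knot_diagram_def)
  have "sum (dart_gen \<alpha> C) (darts V) = (\<Sum>c\<in>V. ?g c)"
    by (simp add: darts_def sum.cartesian_product lessThan_atLeast0)
  then have "bd_lb p 2 (W V \<alpha> C sel) = (\<Sum>c\<in>V. ?w c + ?g c) - sum (dart_gen \<alpha> C) (darts V)"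
    unfolding W_def sum.distrib by (simp add: bd_lb_sum V finite_support_crossing_weight)
  moreover have "(\<Sum>c\<in>V. ?w c + ?g c) \<in> D_SLB p 1"
    using bd_crossing_weight_plus_dart_gens[OF assms(4)] assms(5) V
    unfolding D_SLB_def by (intro zspan_sum) auto
  ultimately show ?thesis
    using sum_dart_gen_in_D_SLB[OF assms(3,4)] unfolding D_SLB_def by (simp add: zspan_diff)
qed

end
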